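(* For every integer $k\ge 6$, there are infinitely many (pairwise non-isomorphic) $k$-vertex-critical graphs that are both $P_5$-free and $C_5$-free.
   Context: $\chi(G)$ denotes the chromatic number of $G$. A graph $G$ is $k$-vertex-critical if $\chi(G)=k$ and $\chi(G-v)<k$ for every vertex $v$ of $G$. $P_5$ is the path on five vertices and $C_5$ is the 5-cycle. A graph is $H$-free if it contains no induced subgraph isomorphic to $H$. *)

theory Defs
  imports Main
begin

type_synonym 'a sgraph = "'a set \<times> 'a set set"

definition verts :: "'a sgraph \<Rightarrow> 'a set" where "verts G = fst G"
definition edges :: "'a sgraph \<Rightarrow> 'a set set" where "edges G = snd G"

definition is_graph :: "'a sgraph \<Rightarrow> bool" where
  "is_graph G \<longleftrightarrow> finite (verts G) \<and>
     (\<forall>e\<in>edges G. \<exists>u v. u \<in> verts G \<and> v \<in> verts G \<and> u \<noteq> v \<and> e = {u, v})"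

definition colorable :: "'a sgraph \<Rightarrow> nat \<Rightarrow> bool" where
  "colorable G k \<longleftrightarrow> (\<exists>c :: 'a \<Rightarrow> nat. (\<forall>v\<in>verts G. c v < k) \<and>
     (\<forall>u\<in>verts G. \<forall>v\<in>verts G. {u, v} \<in> edges G \<longrightarrow> c u \<noteq> c v))"

definition chromatic_number :: "'a sgraph \<Rightarrow> nat" where
  "chromatic_number G = (LEAST k. colorable G k)"

definition delete_vertex :: "'a sgraph \<Rightarrow> 'a \<Rightarrow> 'a sgraph" where
  "delete_vertex G v = (verts G - {v}, {e \<in> edges G. v \<notin> e})"

definition vertex_critical :: "nat \<Rightarrow> 'a sgraph \<Rightarrow> bool" where
  "vertex_critical k G \<longleftrightarrow> is_graph G \<and> chromatic_number G = k \<and>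
     (\<forall>v\<in>verts G. chromatic_number (delete_vertex G v) < k)"

definition induced_sub :: "'b sgraph \<Rightarrow> 'a sgraph \<Rightarrow> bool" where
  "induced_sub H G \<longleftrightarrow> (\<exists>f. inj_on f (verts H) \<and> f ` verts H \<subseteq> verts G \<and>
     (\<forall>u\<in>verts H. \<forall>v\<in>verts H. ({f u, f v} \<in> edges G \<longleftrightarrow> {u, v} \<in> edges H)))"

definition H_free :: "'b sgraph \<Rightarrow> 'a sgraph \<Rightarrow> bool" where
  "H_free H G \<longleftrightarrow> \<not> induced_sub H G"

definition P5 :: "nat sgraph" where
  "P5 = ({0..<5}, {{i, i + 1} | i. i < 4})"

definition C5 :: "nat sgraph" where
  "C5 = ({0..<5}, {{i, (i + 1) mod 5} | i. i < 5})"

definition graph_iso :: "'a sgraph \<Rightarrow> 'b sgraph \<Rightarrow> bool" where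
  "graph_iso G H \<longleftrightarrow> (\<exists>f. bij_betw f (verts G) (verts H) \<and>
     (\<forall>u\<in>verts G. \<forall>v\<in>verts G. ({f u, f v} \<in> edges H \<longleftrightarrow> {u, v} \<in> edges G)))"

end

theory Submission
  imports Defs
begin

text \<open>Let \<open>C\<close> be the \<open>p\<close>-th power of the cycle on \<open>n = 5(p + 1) + 1\<close> vertices and let \<open>G\<close> be
  the complement of \<open>C\<close> joined with a clique on \<open>k - 6\<close> vertices. Colouring the complement of
  \<open>C\<close> means covering \<open>C\<close> by cliques. Cliques of \<open>C\<close> have at most \<open>p + 1\<close> vertices, so
  six are needed, and six blocks of consecutive vertices suffice; after deleting a vertex
  the remaining \<open>5(p + 1)\<close> vertices form a path, covered by five blocks. Hence \<open>G\<close> is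
  \<open>k\<close>-vertex-critical. Since \<open>P\<^sub>5\<close> contains an induced \<open>2K\<^sub>2\<close> and \<open>C\<^sub>5\<close> is
  self-complementary, \<open>G\<close> is \<open>(P\<^sub>5, C\<^sub>5)\<close>-free as soon as \<open>C\<close> has no induced \<open>C\<^sub>4\<close> or
  \<open>C\<^sub>5\<close>; such a cycle would have to wind around the circle in steps of length at most \<open>p\<close>,
  which is impossible for \<open>n > 5p\<close>. Different \<open>p\<close> give graphs of different order.\<close>

text \<open>For \<open>i, j < n\<close> this says that the circular distance of \<open>i\<close> and \<open>j\<close> in \<open>\<int>/n\<close> is at
  most \<open>p\<close>, i.e. that \<open>i = j\<close> or \<open>i\<close> and \<open>j\<close> are adjacent in the \<open>p\<close>-th power of the
  \<open>n\<close>-cycle.\<close>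

definition cyc_close :: "nat \<Rightarrow> nat \<Rightarrow> nat \<Rightarrow> nat \<Rightarrow> bool" where
  "cyc_close n p i j \<longleftrightarrow> (i \<le> j + p \<and> j \<le> i + p) \<or> i + n \<le> j + p \<or> j + n \<le> i + p"

lemma cyc_close_sym: "cyc_close n p i j \<longleftrightarrow> cyc_close n p j i"
  unfolding cyc_close_def by auto

lemma cyc_closeI: "i \<le> j + p \<Longrightarrow> j \<le> i + p \<Longrightarrow> cyc_close n p i j"
  unfolding cyc_close_def by simp

lemma cyc_close_rotate:
  assumes "i < n" "j < n" "s < n"
  shows "cyc_close n p ((i + s) mod n) ((j + s) mod n) \<longleftrightarrow> cyc_close n p i j"
proof -
  have "(x + s) mod n = (if x + s < n then x + s else x + s - n)" if "x < n" for x
    using that assms(3) by (simp add: mod_if)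
  then show ?thesis
    using assms unfolding cyc_close_def by (cases "i + s < n"; cases "j + s < n"; simp; linarith)
qed

lemma card_le_if_pairwise_cyc_close:
  assumes "3 * p < n" and sub: "A \<subseteq> {0..<n}" and cl: "\<forall>x\<in>A. \<forall>y\<in>A. cyc_close n p x y"
  shows "card A \<le> p + 1"
proof (cases "A = {}")
  case True then show ?thesis by simp
next
  case False
  have fin: "finite A" using sub finite_subset by blast
  define a where "a = Min A"
  have aA: "a \<in> A" and amin: "\<forall>b\<in>A. a \<le> b" using fin False a_def by simp_all
  show ?thesis
  proof (cases "\<forall>b\<in>A. b \<le> a + p")
    case True
    then have "A \<subseteq> {a..a+p}" using amin by auto
    then show ?thesis using card_mono[of "{a..a+p}" A] by simp
  next
    case False
    define m where "m = Min {b\<in>A. a + p < b}"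
    have "m \<in> {b\<in>A. a + p < b}" unfolding m_def using False fin by (intro Min_in) auto
    then have mA: "m \<in> A" and mgt: "a + p < m" by auto
    have below_m: "b \<le> a + p" if "b \<in> A" "b < m" for b
      using that fin m_def Min_le[of "{b\<in>A. a + p < b}" b] by (auto simp: not_le[symmetric])
    have "m < n" "a < n" using mA aA sub by auto
    moreover have "cyc_close n p a m" using cl aA mA by blast
    ultimately have wrap: "a + n \<le> m + p" using mgt unfolding cyc_close_def by linarith
    have "A \<subseteq> {m..<n} \<union> {0..m + p - n}"
    proof
      fix b assume bA: "b \<in> A"
      show "b \<in> {m..<n} \<union> {0..m + p - n}"
      proof (cases "m \<le> b")
        case True then show ?thesis using bA sub by auto
      next
        case False
        then have "b \<le> a + p" using below_m bA by simp
        moreover have "cyc_close n p b m" using cl bA mA by blast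
        ultimately have "b + n \<le> m + p"
          using False wrap \<open>3 * p < n\<close> unfolding cyc_close_def by linarith
        then show ?thesis by auto
      qed
    qed
    then have "card A \<le> card ({m..<n} \<union> {0..m + p - n})" by (intro card_mono) auto
    also have "\<dots> \<le> card {m..<n} + card {0..m + p - n}" by (rule card_Un_le)
    also have "\<dots> = p + 1" using wrap \<open>m < n\<close> by simp
    finally show ?thesis .
  qed
qed

lemma cyc_close_no_induced_C4:
  assumes "4 * p < n" "a < n" "b < n" "c < n" "d < n"
    and "\<not> cyc_close n p a b" "\<not> cyc_close n p c d"
    and "cyc_close n p a c" "cyc_close n p a d" "cyc_close n p b c" "cyc_close n p b d"
  shows False
  using assms unfolding cyc_close_def not_le de_Morgan_disj de_Morgan_conj
  by (elim disjE conjE; linarith)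

lemma cyc_close_no_induced_C5_if_first_min:
  assumes n: "5 * p < n" and lt: "a < n" "b < n" "c < n" "d < n" "e < n"
    and min: "a \<le> b" "a \<le> c" "a \<le> d" "a \<le> e"
    and ab: "\<not> cyc_close n p a b" and cd: "\<not> cyc_close n p c d" and ea: "\<not> cyc_close n p e a"
    and ac: "cyc_close n p a c" and bd: "cyc_close n p b d" and ce: "cyc_close n p c e"
    and da: "cyc_close n p d a" and eb: "cyc_close n p e b"
  shows False
proof -
  have b: "a + p < b" "b + p < a + n" and e: "a + p < e" "e + p < a + n"
    using min(1,4) ab ea unfolding cyc_close_def by linarith+
  have c: "c \<le> a + p \<or> a + n \<le> c + p" and d: "d \<le> a + p \<or> a + n \<le> d + p"
    using min(2,3) ac da unfolding cyc_close_def by linarith+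
  have "cyc_close n p c d" if "c \<le> a + p \<longleftrightarrow> d \<le> a + p"
    using that c d n lt min(2,3) unfolding cyc_close_def by linarith
  then consider "c \<le> a + p" "a + n \<le> d + p" | "a + n \<le> c + p" "d \<le> a + p"
    using c d cd by blast
  then show False
  proof cases
    case 1
    have "d \<le> b + p" using bd b 1 n lt unfolding cyc_close_def by linarith
    moreover have "e \<le> c + p" using ce e 1 n lt min(2) unfolding cyc_close_def by linarith
    ultimately show False using eb b e 1 n lt unfolding cyc_close_def by linarith
  next
    case 2
    have "b \<le> d + p" using bd b 2 n lt min(3) unfolding cyc_close_def by linarith
    moreover have "c \<le> e + p" using ce e 2 n lt unfolding cyc_close_def by linarith
    ultimately show False using eb b e 2 n lt unfolding cyc_close_def by linarith
  qed
qed

lemma cyc_close_no_induced_C5: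
  assumes "5 * p < n" "a < n" "b < n" "c < n" "d < n" "e < n"
    and "\<not> cyc_close n p a b" "\<not> cyc_close n p b c" "\<not> cyc_close n p c d"
    and "\<not> cyc_close n p d e" "\<not> cyc_close n p e a"
    and "cyc_close n p a c" "cyc_close n p b d" "cyc_close n p c e"
    and "cyc_close n p d a" "cyc_close n p e b"
  shows False
proof -
  consider "a \<le> b \<and> a \<le> c \<and> a \<le> d \<and> a \<le> e" | "b \<le> a \<and> b \<le> c \<and> b \<le> d \<and> b \<le> e"
    | "c \<le> a \<and> c \<le> b \<and> c \<le> d \<and> c \<le> e" | "d \<le> a \<and> d \<le> b \<and> d \<le> c \<and> d \<le> e"
    | "e \<le> a \<and> e \<le> b \<and> e \<le> c \<and> e \<le> d" by linarith
  then show False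
    using cyc_close_no_induced_C5_if_first_min[of p n a b c d e] cyc_close_no_induced_C5_if_first_min[of p n b c d e a]
      cyc_close_no_induced_C5_if_first_min[of p n c d e a b] cyc_close_no_induced_C5_if_first_min[of p n d e a b c]
      cyc_close_no_induced_C5_if_first_min[of p n e a b c d] assms cyc_close_sym
    by metis
qed

definition compl_cycle_pow_join_adj :: "nat \<Rightarrow> nat \<Rightarrow> nat \<Rightarrow> nat \<Rightarrow> nat \<Rightarrow> bool" where
  "compl_cycle_pow_join_adj n p r i j \<longleftrightarrow> i \<noteq> j \<and> i < n + r \<and> j < n + r \<and>
     (n \<le> i \<or> n \<le> j \<or> \<not> cyc_close n p i j)"

definition compl_cycle_pow_join :: "nat \<Rightarrow> nat \<Rightarrow> nat \<Rightarrow> nat sgraph" where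
  "compl_cycle_pow_join n p r = ({0..<n + r}, {{i, j} | i j. compl_cycle_pow_join_adj n p r i j})"

lemma compl_cycle_pow_join_adj_sym: "compl_cycle_pow_join_adj n p r i j \<longleftrightarrow> compl_cycle_pow_join_adj n p r j i"
  unfolding compl_cycle_pow_join_adj_def using cyc_close_sym by blast

lemma not_compl_cycle_pow_join_adjD:
  assumes "i \<noteq> j" "i < n + r" "j < n + r" "\<not> compl_cycle_pow_join_adj n p r i j"
  shows "i < n \<and> j < n \<and> cyc_close n p i j"
  using assms unfolding compl_cycle_pow_join_adj_def by auto

lemma compl_cycle_pow_join_adj_clique_vertex:
  "n \<le> u \<Longrightarrow> u < n + r \<Longrightarrow> w < n + r \<Longrightarrow> u \<noteq> w \<Longrightarrow> compl_cycle_pow_join_adj n p r u w"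
  unfolding compl_cycle_pow_join_adj_def by simp

lemma verts_compl_cycle_pow_join [simp]: "verts (compl_cycle_pow_join n p r) = {0..<n + r}"
  by (simp add: compl_cycle_pow_join_def verts_def)

lemma edges_compl_cycle_pow_join_iff:
  "{i, j} \<in> edges (compl_cycle_pow_join n p r) \<longleftrightarrow> compl_cycle_pow_join_adj n p r i j"
  unfolding compl_cycle_pow_join_def edges_def using compl_cycle_pow_join_adj_sym by (auto simp: doubleton_eq_iff)

lemma is_graph_compl_cycle_pow_join: "is_graph (compl_cycle_pow_join n p r)"
  unfolding is_graph_def
  by (auto simp: compl_cycle_pow_join_def edges_def verts_def compl_cycle_pow_join_adj_def)

lemma colorable_mono: "colorable G k \<Longrightarrow> k \<le> k' \<Longrightarrow> colorable G k'"
  unfolding colorable_def by (auto intro: order_less_le_trans)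

lemma colorable_delete_vertexI:
  assumes "\<forall>u\<in>verts G - {v}. c u < k"
    and "\<forall>u\<in>verts G - {v}. \<forall>w\<in>verts G - {v}. {u, w} \<in> edges G \<longrightarrow> c u \<noteq> c w"
  shows "colorable (delete_vertex G v) k"
  using assms unfolding colorable_def delete_vertex_def verts_def edges_def by auto

lemma compl_cycle_pow_join_coloring:
  assumes W: "W \<subseteq> {0..<n + r}" and "card {u\<in>W. n \<le> u} \<le> s"
    and f_range: "\<forall>u\<in>W. u < n \<longrightarrow> f u < m"
    and f_classes: "\<forall>u\<in>W. \<forall>w\<in>W. u < n \<longrightarrow> w < n \<longrightarrow> f u = f w \<longrightarrow> cyc_close n p u w"
  obtains c where "\<forall>u\<in>W. c u < m + s"
    and "\<forall>u\<in>W. \<forall>w\<in>W. compl_cycle_pow_join_adj n p r u w \<longrightarrow> c u \<noteq> c w"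
proof -
  have "finite {u\<in>W. n \<le> u}" using W by (simp add: finite_subset)
  then obtain h where h: "bij_betw h {u\<in>W. n \<le> u} {0..<card {u\<in>W. n \<le> u}}"
    using ex_bij_betw_finite_nat by blast
  define c where "c u = (if u < n then f u else m + h u)" for u
  show ?thesis
  proof
    show "\<forall>u\<in>W. c u < m + s"
      using f_range bij_betwE[OF h] \<open>card _ \<le> s\<close> unfolding c_def by fastforce
    show "\<forall>u\<in>W. \<forall>w\<in>W. compl_cycle_pow_join_adj n p r u w \<longrightarrow> c u \<noteq> c w"
    proof (intro ballI impI)
      fix u w assume "u \<in> W" "w \<in> W" and uw: "compl_cycle_pow_join_adj n p r u w"
      show "c u \<noteq> c w"
      proof (cases "u < n \<and> w < n")
        case True
        then show ?thesis using uw f_classes \<open>u \<in> W\<close> \<open>w \<in> W\<close>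
          unfolding c_def compl_cycle_pow_join_adj_def by auto
      next
        case False
        have "u \<noteq> w" using uw unfolding compl_cycle_pow_join_adj_def by simp
        then have "h u \<noteq> h w" if "n \<le> u" "n \<le> w"
          using that \<open>u \<in> W\<close> \<open>w \<in> W\<close> bij_betw_imp_inj_on[OF h] unfolding inj_on_def by blast
        moreover have "f x < m + h y" if "x \<in> W" "x < n" for x y using f_range that by fastforce
        ultimately show ?thesis using False \<open>u \<in> W\<close> \<open>w \<in> W\<close> unfolding c_def
          by (metis add_left_cancel less_irrefl not_less)
      qed
    qed
  qed
qed

lemma cyc_close_if_same_block:
  assumes "i div (p + 1) = j div (p + 1)"
  shows "cyc_close n p i j"
proof (rule cyc_closeI)
  have "i div (p + 1) * (p + 1) = j div (p + 1) * (p + 1)" using assms by simp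
  then show "i \<le> j + p" "j \<le> i + p"
    using div_mult_mod_eq[of i "p + 1"] div_mult_mod_eq[of j "p + 1"]
      mod_less_divisor[of "p + 1" i] mod_less_divisor[of "p + 1" j] by linarith+
qed

lemma colorable_compl_cycle_pow_join:
  assumes "n \<le> m * (p + 1)"
  shows "colorable (compl_cycle_pow_join n p r) (m + r)"
proof -
  have "{u \<in> {0..<n + r}. n \<le> u} = {n..<n + r}" by auto
  then have "card {u \<in> {0..<n + r}. n \<le> u} \<le> r" by simp
  moreover have "\<forall>u\<in>{0..<n + r}. u < n \<longrightarrow> u div (p + 1) < m"
    using assms by (auto simp: less_mult_imp_div_less)
  moreover have "\<forall>u\<in>{0..<n + r}. \<forall>w\<in>{0..<n + r}.
      u < n \<longrightarrow> w < n \<longrightarrow> u div (p + 1) = w div (p + 1) \<longrightarrow> cyc_close n p u w"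
    by (simp add: cyc_close_if_same_block)
  ultimately obtain c where "\<forall>u\<in>{0..<n + r}. c u < m + r"
    and "\<forall>u\<in>{0..<n + r}. \<forall>w\<in>{0..<n + r}. compl_cycle_pow_join_adj n p r u w \<longrightarrow> c u \<noteq> c w"
    by (rule compl_cycle_pow_join_coloring[OF subset_refl])
  then show ?thesis unfolding colorable_def by (auto simp: edges_compl_cycle_pow_join_iff)
qed

lemma colorable_delete_base_vertex:
  assumes "v < n" "n \<le> m * (p + 1) + 1"
  shows "colorable (delete_vertex (compl_cycle_pow_join n p r) v) (m + r)"
proof -
  let ?W = "{0..<n + r} - {v}"
  txt \<open>Rotating \<open>v\<close> to \<open>n - 1\<close> leaves the path \<open>0..<n - 1\<close>, which is covered by \<open>m\<close>
    blocks of \<open>p + 1\<close> consecutive vertices.\<close>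
  define rot where "rot u = (u + (n - 1 - v)) mod n" for u
  have rot_less: "rot u < n - 1" if "u < n" "u \<noteq> v" for u
  proof -
    have "rot u < n" "rot v = n - 1" using assms(1) unfolding rot_def by simp_all
    moreover have "rot u \<noteq> rot v"
      using that assms(1) unfolding rot_def by (auto simp: mod_if split: if_splits)
    ultimately show ?thesis by simp
  qed
  have "{u \<in> ?W. n \<le> u} = {n..<n + r}" using assms(1) by auto
  then have "card {u \<in> ?W. n \<le> u} \<le> r" by simp
  moreover have "\<forall>u\<in>?W. u < n \<longrightarrow> rot u div (p + 1) < m"
  proof (intro ballI impI)
    fix u assume "u \<in> ?W" "u < n"
    then have "rot u < m * (p + 1)" using rot_less[of u] assms(2) by auto
    then show "rot u div (p + 1) < m" by (simp add: less_mult_imp_div_less)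
  qed
  moreover have "\<forall>u\<in>?W. \<forall>w\<in>?W.
      u < n \<longrightarrow> w < n \<longrightarrow> rot u div (p + 1) = rot w div (p + 1) \<longrightarrow> cyc_close n p u w"
  proof (intro ballI impI)
    fix u w assume "u \<in> ?W" "w \<in> ?W" "u < n" "w < n" and "rot u div (p + 1) = rot w div (p + 1)"
    then have "cyc_close n p (rot u) (rot w)" by (intro cyc_close_if_same_block)
    then show "cyc_close n p u w"
      using cyc_close_rotate[OF \<open>u < n\<close> \<open>w < n\<close>, of "n - 1 - v"] assms(1) unfolding rot_def by simp
  qed
  ultimately obtain c where "\<forall>u\<in>?W. c u < m + r"
    and "\<forall>u\<in>?W. \<forall>w\<in>?W. compl_cycle_pow_join_adj n p r u w \<longrightarrow> c u \<noteq> c w"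
    by (rule compl_cycle_pow_join_coloring[OF Diff_subset])
  then show ?thesis by (intro colorable_delete_vertexI) (auto simp: edges_compl_cycle_pow_join_iff)
qed

lemma colorable_delete_clique_vertex:
  assumes "n \<le> v" "v < n + r" "n \<le> m * (p + 1) + 1"
  shows "colorable (delete_vertex (compl_cycle_pow_join n p r) v) (m + r)"
proof -
  let ?W = "{0..<n + r} - {v}"
  have "{u \<in> ?W. n \<le> u} = {n..<n + r} - {v}" by auto
  then have "card {u \<in> ?W. n \<le> u} \<le> r - 1" using assms(1,2) by simp
  moreover have "\<forall>u\<in>?W. u < n \<longrightarrow> u div (p + 1) < Suc m"
    using assms(3) by (auto simp: less_mult_imp_div_less)
  moreover have "\<forall>u\<in>?W. \<forall>w\<in>?W.
      u < n \<longrightarrow> w < n \<longrightarrow> u div (p + 1) = w div (p + 1) \<longrightarrow> cyc_close n p u w"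
    by (simp add: cyc_close_if_same_block)
  ultimately obtain c where "\<forall>u\<in>?W. c u < Suc m + (r - 1)"
    and "\<forall>u\<in>?W. \<forall>w\<in>?W. compl_cycle_pow_join_adj n p r u w \<longrightarrow> c u \<noteq> c w"
    by (rule compl_cycle_pow_join_coloring[OF Diff_subset])
  moreover have "Suc m + (r - 1) = m + r" using assms(1,2) by simp
  ultimately show ?thesis by (intro colorable_delete_vertexI) (auto simp: edges_compl_cycle_pow_join_iff)
qed

lemma not_colorable_compl_cycle_pow_join:
  assumes "3 * p < n" "m * (p + 1) < n"
  shows "\<not> colorable (compl_cycle_pow_join n p r) (m + r)"
proof
  assume "colorable (compl_cycle_pow_join n p r) (m + r)"
  then obtain c where c_range: "\<forall>u\<in>{0..<n + r}. c u < m + r"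
    and c_proper: "\<And>u w. u < n + r \<Longrightarrow> w < n + r \<Longrightarrow> compl_cycle_pow_join_adj n p r u w \<Longrightarrow> c u \<noteq> c w"
    unfolding colorable_def by (auto simp: edges_compl_cycle_pow_join_iff)
  txt \<open>The clique vertices need \<open>r\<close> private colours, so at most \<open>m\<close> colour classes remain
    for the base vertices, and each of them is a clique of the cycle power.\<close>
  define B where "B = c ` {0..<n}"
  have "inj_on c {n..<n + r}"
    using c_proper compl_cycle_pow_join_adj_clique_vertex unfolding inj_on_def by (meson atLeastLessThan_iff)
  then have "card (c ` {n..<n + r}) = r" by (simp add: card_image)
  moreover have "B \<inter> c ` {n..<n + r} = {}"
  proof -
    have "c u \<noteq> c w" if "u < n" "w \<in> {n..<n + r}" for u w
      using c_proper[of w u] compl_cycle_pow_join_adj_clique_vertex[of n w r u p] that by auto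
    then show ?thesis unfolding B_def by auto
  qed
  moreover have "B \<union> c ` {n..<n + r} \<subseteq> {0..<m + r}"
    using c_range unfolding B_def by auto
  ultimately have "card B + r \<le> m + r"
    using card_mono[of "{0..<m + r}" "B \<union> c ` {n..<n + r}"] card_Un_disjoint[of B "c ` {n..<n + r}"]
    unfolding B_def by simp
  define A where "A j = {u\<in>{0..<n}. c u = j}" for j
  have A_card: "card (A j) \<le> p + 1" for j
  proof (rule card_le_if_pairwise_cyc_close[OF assms(1)])
    show "A j \<subseteq> {0..<n}" unfolding A_def by auto
    show "\<forall>x\<in>A j. \<forall>y\<in>A j. cyc_close n p x y"
    proof (intro ballI)
      fix x y assume "x \<in> A j" "y \<in> A j"
      then have "x < n" "y < n" "c x = c y" unfolding A_def by auto
      then show "cyc_close n p x y"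
        using c_proper[of x y] not_compl_cycle_pow_join_adjD[of x y n r p] cyc_closeI[of x x p n] by fastforce
    qed
  qed
  have "(\<Union>j\<in>B. A j) = {0..<n}" unfolding A_def B_def by auto
  then have "n = card (\<Union>j\<in>B. A j)" by simp
  also have "\<dots> \<le> (\<Sum>j\<in>B. card (A j))" by (rule card_UN_le) (simp add: B_def)
  also have "\<dots> \<le> card B * (p + 1)" using sum_bounded_above[of B "\<lambda>j. card (A j)", OF A_card] by simp
  also have "\<dots> \<le> m * (p + 1)" using \<open>card B + r \<le> m + r\<close> by (intro mult_right_mono) simp_all
  finally show False using assms(2) by simp
qed

lemma chromatic_number_eqI:
  assumes "colorable G (Suc k)" "\<not> colorable G k"
  shows "chromatic_number G = Suc k"
  unfolding chromatic_number_def
proof (rule Least_equality)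
  show "colorable G (Suc k)" by (fact assms(1))
  show "Suc k \<le> j" if "colorable G j" for j
    using that assms(2) colorable_mono[of G j k] by (meson not_less_eq_eq)
qed

lemma chromatic_number_le: "colorable G k \<Longrightarrow> chromatic_number G \<le> k"
  unfolding chromatic_number_def by (rule Least_le)

lemma vertex_critical_compl_cycle_pow_join:
  assumes "3 \<le> m"
  shows "vertex_critical (Suc m + r) (compl_cycle_pow_join (m * (p + 1) + 1) p r)"
  unfolding vertex_critical_def
proof (intro conjI ballI)
  let ?n = "m * (p + 1) + 1"
  show "is_graph (compl_cycle_pow_join ?n p r)" by (rule is_graph_compl_cycle_pow_join)
  have "3 * p < ?n" using mult_le_mono1[OF assms, of "p + 1"] by simp
  then have "\<not> colorable (compl_cycle_pow_join ?n p r) (m + r)"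
    by (intro not_colorable_compl_cycle_pow_join) simp_all
  moreover have "colorable (compl_cycle_pow_join ?n p r) (Suc m + r)"
    by (rule colorable_compl_cycle_pow_join) simp
  ultimately show "chromatic_number (compl_cycle_pow_join ?n p r) = Suc m + r"
    using chromatic_number_eqI[of _ "m + r"] by simp
  fix v assume "v \<in> verts (compl_cycle_pow_join ?n p r)"
  then have "colorable (delete_vertex (compl_cycle_pow_join ?n p r) v) (m + r)"
    using colorable_delete_base_vertex colorable_delete_clique_vertex by (cases "v < ?n") auto
  then show "chromatic_number (delete_vertex (compl_cycle_pow_join ?n p r) v) < Suc m + r"
    using chromatic_number_le by fastforce
qed

lemma P5_edges:
  "{0::nat, 1} \<in> edges P5" "{3::nat, 4} \<in> edges P5"
  "{0::nat, 3} \<notin> edges P5" "{0::nat, 4} \<notin> edges P5" "{1::nat, 3} \<notin> edges P5" "{1::nat, 4} \<notin> edges P5"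
  unfolding P5_def edges_def by (auto simp: doubleton_eq_iff)

lemma C5_edges:
  "{0::nat, 1} \<in> edges C5" "{1::nat, 2} \<in> edges C5" "{2::nat, 3} \<in> edges C5"
  "{3::nat, 4} \<in> edges C5" "{4::nat, 0} \<in> edges C5"
  "{0::nat, 2} \<notin> edges C5" "{1::nat, 3} \<notin> edges C5" "{2::nat, 4} \<notin> edges C5"
  "{3::nat, 0} \<notin> edges C5" "{4::nat, 1} \<notin> edges C5"
  unfolding C5_def edges_def by (auto simp: doubleton_eq_iff)

lemma induced_sub_compl_cycle_pow_joinE:
  assumes "induced_sub H (compl_cycle_pow_join n p r)" "verts H = {0..<5::nat}"
  obtains f where "\<And>i. i < 5 \<Longrightarrow> f i < n + r"
    and "\<And>i j. i < 5 \<Longrightarrow> j < 5 \<Longrightarrow> i \<noteq> j \<Longrightarrow> f i \<noteq> f j"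
    and "\<And>i j. i < 5 \<Longrightarrow> j < 5 \<Longrightarrow> compl_cycle_pow_join_adj n p r (f i) (f j) \<longleftrightarrow> {i, j} \<in> edges H"
proof -
  obtain f where "inj_on f {0..<5}" "f ` {0..<5} \<subseteq> {0..<n + r}"
    and "\<forall>u\<in>{0..<5}. \<forall>v\<in>{0..<5}. {f u, f v} \<in> edges (compl_cycle_pow_join n p r) \<longleftrightarrow> {u, v} \<in> edges H"
    using assms unfolding induced_sub_def by auto
  then show thesis
    by (intro that[of f]) (auto simp: edges_compl_cycle_pow_join_iff inj_on_def image_subset_iff)
qed

lemma H_free_P5_compl_cycle_pow_join:
  assumes "4 * p < n"
  shows "H_free P5 (compl_cycle_pow_join n p r)"
  unfolding H_free_def
proof
  assume "induced_sub P5 (compl_cycle_pow_join n p r)"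
  moreover have "verts P5 = {0..<5}" by (simp add: P5_def verts_def)
  ultimately obtain f where f_range: "\<And>i. i < 5 \<Longrightarrow> f i < n + r"
    and f_inj: "\<And>i j. i < 5 \<Longrightarrow> j < 5 \<Longrightarrow> i \<noteq> j \<Longrightarrow> f i \<noteq> f j"
    and f_adj: "\<And>i j. i < 5 \<Longrightarrow> j < 5 \<Longrightarrow> compl_cycle_pow_join_adj n p r (f i) (f j) \<longleftrightarrow> {i, j} \<in> edges P5"
    by (rule induced_sub_compl_cycle_pow_joinE) (rule that)
  have close: "f i < n \<and> f j < n \<and> cyc_close n p (f i) (f j)"
    if "i < 5" "j < 5" "i \<noteq> j" "{i, j} \<notin> edges P5" for i j
    using not_compl_cycle_pow_join_adjD[OF f_inj f_range f_range] f_adj that by blast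
  have "\<not> cyc_close n p (f 0) (f 1)" "\<not> cyc_close n p (f 3) (f 4)"
    using f_adj[of 0 1] f_adj[of 3 4] P5_edges close[of 0 3] close[of 1 4]
    unfolding compl_cycle_pow_join_adj_def by auto
  then show False
    using cyc_close_no_induced_C4[OF assms, of "f 0" "f 1" "f 3" "f 4"]
      close[of 0 3] close[of 0 4] close[of 1 3] close[of 1 4] P5_edges by auto
qed

lemma H_free_C5_compl_cycle_pow_join:
  assumes "5 * p < n"
  shows "H_free C5 (compl_cycle_pow_join n p r)"
  unfolding H_free_def
proof
  assume "induced_sub C5 (compl_cycle_pow_join n p r)"
  moreover have "verts C5 = {0..<5}" by (simp add: C5_def verts_def)
  ultimately obtain f where f_range: "\<And>i. i < 5 \<Longrightarrow> f i < n + r"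
    and f_inj: "\<And>i j. i < 5 \<Longrightarrow> j < 5 \<Longrightarrow> i \<noteq> j \<Longrightarrow> f i \<noteq> f j"
    and f_adj: "\<And>i j. i < 5 \<Longrightarrow> j < 5 \<Longrightarrow> compl_cycle_pow_join_adj n p r (f i) (f j) \<longleftrightarrow> {i, j} \<in> edges C5"
    by (rule induced_sub_compl_cycle_pow_joinE) (rule that)
  have close: "f i < n \<and> f j < n \<and> cyc_close n p (f i) (f j)"
    if "i < 5" "j < 5" "i \<noteq> j" "{i, j} \<notin> edges C5" for i j
    using not_compl_cycle_pow_join_adjD[OF f_inj f_range f_range] f_adj that by blast
  have "\<not> cyc_close n p (f 0) (f 1)" "\<not> cyc_close n p (f 1) (f 2)" "\<not> cyc_close n p (f 2) (f 3)"
    "\<not> cyc_close n p (f 3) (f 4)" "\<not> cyc_close n p (f 4) (f 0)"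
    using f_adj[of 0 1] f_adj[of 1 2] f_adj[of 2 3] f_adj[of 3 4] f_adj[of 4 0] C5_edges
      close[of 0 2] close[of 1 3] close[of 2 4] close[of 3 0] close[of 4 1]
    unfolding compl_cycle_pow_join_adj_def by auto
  then show False
    using cyc_close_no_induced_C5[OF assms, of "f 0" "f 1" "f 2" "f 3" "f 4"]
      close[of 0 2] close[of 1 3] close[of 2 4] close[of 3 0] close[of 4 1] C5_edges by auto
qed

lemma graph_iso_card_verts: "graph_iso G H \<Longrightarrow> card (verts G) = card (verts H)"
  unfolding graph_iso_def using bij_betw_same_card by blast

theorem corollary2p8:
  fixes k :: nat
  assumes "k \<ge> 6"
  shows "\<exists>S :: nat sgraph set. infinite S \<and>
    (\<forall>G\<in>S. vertex_critical k G \<and> H_free P5 G \<and> H_free C5 G) \<and>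
    (\<forall>G\<in>S. \<forall>H\<in>S. G \<noteq> H \<longrightarrow> \<not> graph_iso G H)"
proof -
  define r where "r = k - 6"
  have k: "k = Suc 5 + r" using assms unfolding r_def by simp
  define Gp where "Gp p = compl_cycle_pow_join (5 * (p + 1) + 1) p r" for p
  have card_Gp: "card (verts (Gp p)) = 5 * p + k" for p
    unfolding Gp_def k by simp
  then have "inj Gp" by (intro injI) (metis add_right_cancel mult_left_cancel zero_neq_numeral)
  moreover have "vertex_critical k (Gp p)" for p
    unfolding Gp_def k by (rule vertex_critical_compl_cycle_pow_join) simp
  moreover have "H_free P5 (Gp p)" "H_free C5 (Gp p)" for p
    unfolding Gp_def by (rule H_free_P5_compl_cycle_pow_join H_free_C5_compl_cycle_pow_join; simp)+
  moreover have "\<not> graph_iso (Gp p) (Gp q)" if "Gp p \<noteq> Gp q" for p q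
    using that graph_iso_card_verts card_Gp by fastforce
  ultimately show ?thesis
    by (intro exI[of _ "range Gp"]) (auto dest: finite_imageD)
qed

end
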